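(* Let $\{a_l\}_{l\ge0}$ be a sequence of complex numbers and let $a_l^*=\sum_{k=0}^l\binom lk(-1)^ka_k$ for $l\ge0$. For $k\ge0$ set $$A_k(t)=\sum_{l=0}^k\binom kl(-1)^la_lt^{k-l},\qquad A_k^*(t)=\sum_{l=0}^k\binom kl(-1)^la_l^*t^{k-l}.$$ Let $n$ be a positive integer, let $r,s,t$ be complex numbers with $r+s+t=n-1$, and let $x,y,z$ be complex numbers with $x+y+z=1$. Then $$\sum_{k=0}^n(-1)^k\binom rkx^{n-k}\left(\binom {s}{n-k}A_k(y)-(-1)^n\binom t{n-k}A_k^*(z)\right)=0.$$
   Context: For complex $z$ and integer $k\ge0$, $\binom zk=z(z-1)\cdots(z-k+1)/k!$ (with $\binom z0=1$). *)

theory Defs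
  imports Complex_Main
begin

definition dual_seq :: "(nat \<Rightarrow> complex) \<Rightarrow> nat \<Rightarrow> complex" where
  "dual_seq a l = (\<Sum>k=0..l. of_nat (l choose k) * (-1)^k * a k)"

definition A_poly :: "(nat \<Rightarrow> complex) \<Rightarrow> nat \<Rightarrow> complex \<Rightarrow> complex" where
  "A_poly a k t = (\<Sum>l=0..k. of_nat (k choose l) * (-1)^l * a l * t^(k - l))"

end

theory Submission
  imports Defs "HOL-Computational_Algebra.Formal_Power_Series"
begin

text \<open>
  Reversing the binomial transform reflects the polynomials: A*_k(z) = (-1)^k A_k(1 - z), and
  1 - z = x + y.  The sum is then linear in the a_l; expanding each A_k and using
  C(r,k) C(k,l) = C(r,l) C(r-l,k-l), the coefficient of a_l vanishes by the identity
    sum_m (-1)^m C(r,m) C(s,N-m) x^(N-m) y^m = (-1)^N sum_m C(r,m) C(t,N-m) x^(N-m) (x+y)^m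
  for r + s + t = N - 1, applied to r - l and N = n - l.  That identity follows by expanding
  (x+y)^m, the same trinomial revision, Chu-Vandermonde, and upper negation
  C(r - i + t, N - i) = (-1)^(N-i) C(s, N - i).
\<close>

lemma sum_triangle_shift:
  fixes f :: "nat \<Rightarrow> nat \<Rightarrow> 'a::comm_monoid_add"
  shows "(\<Sum>k=0..n. \<Sum>j=0..k. f k j) = (\<Sum>j=0..n. \<Sum>m=0..n-j. f (j + m) j)"
proof -
  have "(\<Sum>k=0..n. \<Sum>j=0..k. f k j) = (\<Sum>(j,m)\<in>{(j,m). j + m \<le> n}. f (j + m) j)"
    by (simp add: sum.triangle_reindex_eq atLeast0AtMost)
  also have "{(j,m). j + m \<le> n} = Sigma {0..n} (\<lambda>j. {0..n-j})"
    by auto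
  finally show ?thesis
    by (simp add: sum.Sigma)
qed

lemma gchoose_mult_binomial:
  fixes r :: "'a::field_char_0"
  shows "(r gchoose (j + m)) * of_nat ((j + m) choose j) = (r gchoose j) * ((r - of_nat j) gchoose m)"
  using gbinomial_trinomial_revision[of j "j + m" r] by (simp add: binomial_gbinomial)

lemma sum_gchoose_binomial_convolution:
  fixes r :: "'a::field_char_0"
  shows "(\<Sum>k=0..n. (r gchoose k) * g k * (\<Sum>j=0..k. of_nat (k choose j) * b j * h (k - j)))
       = (\<Sum>j=0..n. (r gchoose j) * b j * (\<Sum>m=0..n-j. ((r - of_nat j) gchoose m) * g (j + m) * h m))"
proof -
  have "(\<Sum>k=0..n. (r gchoose k) * g k * (\<Sum>j=0..k. of_nat (k choose j) * b j * h (k - j)))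
      = (\<Sum>k=0..n. \<Sum>j=0..k. (r gchoose k) * of_nat (k choose j) * g k * b j * h (k - j))"
    by (simp add: sum_distrib_left mult_ac)
  also have "\<dots> = (\<Sum>j=0..n. \<Sum>m=0..n-j. (r gchoose (j + m)) * of_nat ((j + m) choose j) * g (j + m) * b j * h m)"
    by (simp add: sum_triangle_shift)
  also have "\<dots> = (\<Sum>j=0..n. (r gchoose j) * b j * (\<Sum>m=0..n-j. ((r - of_nat j) gchoose m) * g (j + m) * h m))"
    by (simp add: gchoose_mult_binomial sum_distrib_left mult_ac)
  finally show ?thesis .
qed

lemma gbinomial_Vandermonde_power:
  fixes a b x :: "'a::field_char_0"
  shows "(\<Sum>p=0..M. (a gchoose p) * (b gchoose (M - p)) * x^(M - p) * x^p) = ((a + b) gchoose M) * x^M"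
proof -
  have "(\<Sum>p=0..M. (a gchoose p) * (b gchoose (M - p)) * x^(M - p) * x^p)
      = (\<Sum>p=0..M. (a gchoose p) * (b gchoose (M - p)) * x^M)"
    by (intro sum.cong refl) (simp add: mult.assoc flip: power_add)
  then show ?thesis
    by (simp add: gbinomial_Vandermonde flip: sum_distrib_right)
qed

lemma sum_gchoose_power_reflect:
  fixes r s t x y :: "'a::field_char_0"
  assumes "r + s + t = of_nat N - 1"
  shows "(\<Sum>m=0..N. (-1)^m * (r gchoose m) * (s gchoose (N - m)) * x^(N - m) * y^m)
       = (-1)^N * (\<Sum>m=0..N. (r gchoose m) * (t gchoose (N - m)) * x^(N - m) * (x + y)^m)"
proof -
  have "(x + y)^m = (\<Sum>i=0..m. of_nat (m choose i) * y^i * x^(m - i))" for m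
    by (subst add.commute) (simp add: binomial_ring atLeast0AtMost)
  then have "(\<Sum>m=0..N. (r gchoose m) * (t gchoose (N - m)) * x^(N - m) * (x + y)^m)
      = (\<Sum>m=0..N. (r gchoose m) * ((t gchoose (N - m)) * x^(N - m))
                   * (\<Sum>i=0..m. of_nat (m choose i) * y^i * x^(m - i)))"
    by (simp add: mult.assoc)
  also have "\<dots> = (\<Sum>i=0..N. (r gchoose i) * y^i
                   * (\<Sum>p=0..N-i. ((r - of_nat i) gchoose p) * ((t gchoose (N - (i + p))) * x^(N - (i + p))) * x^p))"
    by (rule sum_gchoose_binomial_convolution)
  also have "\<dots> = (\<Sum>i=0..N. (r gchoose i) * y^i * x^(N - i) * ((r - of_nat i + t) gchoose (N - i)))"
  proof (rule sum.cong[OF refl])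
    fix i
    show "(r gchoose i) * y^i * (\<Sum>p=0..N-i. ((r - of_nat i) gchoose p) * ((t gchoose (N - (i + p))) * x^(N - (i + p))) * x^p)
        = (r gchoose i) * y^i * x^(N - i) * ((r - of_nat i + t) gchoose (N - i))"
      using gbinomial_Vandermonde_power[of "r - of_nat i" t "N - i" x] by (simp add: mult_ac)
  qed
  also have "\<dots> = (\<Sum>i=0..N. (r gchoose i) * y^i * x^(N - i) * ((-1)^(N - i) * (s gchoose (N - i))))"
  proof (rule sum.cong[OF refl])
    fix i assume "i \<in> {0..N}"
    then have "of_nat (N - i) - (r - of_nat i + t) - 1 = s"
      using assms by (simp add: of_nat_diff algebra_simps)
    then show "(r gchoose i) * y^i * x^(N - i) * ((r - of_nat i + t) gchoose (N - i))
        = (r gchoose i) * y^i * x^(N - i) * ((-1)^(N - i) * (s gchoose (N - i)))"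
      by (simp add: gbinomial_negated_upper[of "r - of_nat i + t"])
  qed
  finally have "(-1)^N * (\<Sum>m=0..N. (r gchoose m) * (t gchoose (N - m)) * x^(N - m) * (x + y)^m)
      = (\<Sum>i=0..N. ((-1)^N * (-1)^(N - i)) * (r gchoose i) * (s gchoose (N - i)) * x^(N - i) * y^i)"
    by (simp add: sum_distrib_left mult_ac)
  also have "\<dots> = (\<Sum>i=0..N. (-1)^i * (r gchoose i) * (s gchoose (N - i)) * x^(N - i) * y^i)"
    by (intro sum.cong refl) (auto simp: minus_one_power_iff)
  finally show ?thesis ..
qed

lemma sum_gchoose_power_reflect_shift:
  fixes r s t x y :: "'a::field_char_0"
  assumes "r + s + t = of_nat n - 1" and "j \<le> n"
  shows "(\<Sum>m=0..n-j. ((r - of_nat j) gchoose m) * ((-1)^(j + m) * (s gchoose (n - (j + m))) * x^(n - (j + m))) * y^m)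
       = (\<Sum>m=0..n-j. ((r - of_nat j) gchoose m) * ((-1)^n * (t gchoose (n - (j + m))) * x^(n - (j + m))) * (x + y)^m)"
proof -
  have "r - of_nat j + s + t = of_nat (n - j) - 1"
    using assms by (simp add: of_nat_diff algebra_simps)
  from sum_gchoose_power_reflect[OF this, of x y]
  have "(-1)^j * (\<Sum>m=0..n-j. (-1)^m * ((r - of_nat j) gchoose m) * (s gchoose (n - j - m)) * x^(n - j - m) * y^m)
      = ((-1)^j * (-1)^(n - j)) * (\<Sum>m=0..n-j. ((r - of_nat j) gchoose m) * (t gchoose (n - j - m)) * x^(n - j - m) * (x + y)^m)"
    by simp
  also have "(-1)^j * (-1)^(n - j) = (-1::'a)^n"
    using assms(2) by (simp flip: power_add)
  finally show ?thesis
    by (simp add: sum_distrib_left power_add mult_ac)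
qed

lemma A_poly_reflect:
  "(-1)^k * A_poly a k (1 - w) = (\<Sum>j=0..k. of_nat (k choose j) * a j * (w - 1)^(k - j))"
  unfolding A_poly_def sum_distrib_left
proof (rule sum.cong[OF refl])
  fix j assume "j \<in> {0..k}"
  then have "(-1::complex)^k = (-1)^j * (-1)^(k - j)"
    by (simp flip: power_add)
  moreover have "(w - 1)^(k - j) = (-1)^(k - j) * (1 - w)^(k - j)"
    by (simp flip: power_mult_distrib)
  moreover have "(-1::complex)^j * (-1)^j = 1"
    by (simp flip: power_add)
  ultimately show "(-1)^k * (of_nat (k choose j) * (-1)^j * a j * (1 - w)^(k - j))
      = of_nat (k choose j) * a j * (w - 1)^(k - j)"
    by (simp add: mult_ac)
qed

lemma A_poly_dual_seq: "A_poly (dual_seq a) k z = (-1)^k * A_poly a k (1 - z)"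
proof -
  have "A_poly (dual_seq a) k z
      = (\<Sum>l=0..k. (of_nat k gchoose l) * ((-1)^l * z^(k - l))
                   * (\<Sum>j=0..l. of_nat (l choose j) * ((-1)^j * a j) * 1))"
    \<comment> \<open>the convolution shape with h = 1\<close>
    unfolding A_poly_def dual_seq_def by (simp add: binomial_gbinomial sum_distrib_left mult_ac)
  also have "\<dots> = (\<Sum>j=0..k. (of_nat k gchoose j) * ((-1)^j * a j)
                   * (\<Sum>m=0..k-j. ((of_nat k - of_nat j) gchoose m) * ((-1)^(j + m) * z^(k - (j + m))) * 1))"
    by (rule sum_gchoose_binomial_convolution)
  also have "\<dots> = (\<Sum>j=0..k. of_nat (k choose j) * a j * (z - 1)^(k - j))"
  proof (rule sum.cong[OF refl])
    fix j assume "j \<in> {0..k}"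
    then have "of_nat k - of_nat j = (of_nat (k - j) :: complex)"
      by (simp add: of_nat_diff)
    moreover have "(z - 1)^(k - j) = (\<Sum>m=0..k-j. of_nat ((k - j) choose m) * (-1)^m * z^(k - j - m))"
      using binomial_ring[of "-1" z "k - j"] by (simp add: atLeast0AtMost)
    moreover have "(-1::complex)^j * (-1)^j = 1"
      by (simp flip: power_add)
    ultimately show "(of_nat k gchoose j) * ((-1)^j * a j)
          * (\<Sum>m=0..k-j. ((of_nat k - of_nat j) gchoose m) * ((-1)^(j + m) * z^(k - (j + m))) * 1)
        = of_nat (k choose j) * a j * (z - 1)^(k - j)"
      by (simp add: binomial_gbinomial sum_distrib_left power_add mult_ac)
  qed
  also have "\<dots> = (-1)^k * A_poly a k (1 - z)"
    by (simp add: A_poly_reflect)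
  finally show ?thesis .
qed

theorem lemma2p2:
  fixes a :: "nat \<Rightarrow> complex" and n :: nat and r s t x y z :: complex
  assumes "n > 0"
    and "r + s + t = of_nat n - 1"
    and "x + y + z = 1"
  shows "(\<Sum>k=0..n. (-1)^k * (r gchoose k) * x^(n-k) *
           ((s gchoose (n-k)) * A_poly a k y
            - (-1)^n * (t gchoose (n-k)) * A_poly (dual_seq a) k z)) = 0"
proof -
  define b where "b j = (-1)^j * a j" for j
  have A_poly_eq: "A_poly a k w = (\<Sum>j=0..k. of_nat (k choose j) * b j * w^(k - j))" for k w
    unfolding A_poly_def b_def by (simp add: mult.assoc)
  have "1 - z = x + y"
    using assms(3) by (simp add: algebra_simps)
  then have dual: "(-1)^k * A_poly (dual_seq a) k z = A_poly a k (x + y)" for k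
    by (simp add: A_poly_dual_seq flip: power_add mult_2)
  have "(\<Sum>k=0..n. (-1)^k * (r gchoose k) * x^(n-k) *
           ((s gchoose (n-k)) * A_poly a k y
            - (-1)^n * (t gchoose (n-k)) * A_poly (dual_seq a) k z))
      = (\<Sum>k=0..n. (r gchoose k) * ((-1)^k * (s gchoose (n - k)) * x^(n - k)) * A_poly a k y)
        - (\<Sum>k=0..n. (r gchoose k) * ((-1)^n * (t gchoose (n - k)) * x^(n - k)) * A_poly a k (x + y))"
    by (simp add: right_diff_distrib sum_subtractf mult_ac flip: dual)
  also have "\<dots> = (\<Sum>j=0..n. (r gchoose j) * b j *
        ((\<Sum>m=0..n-j. ((r - of_nat j) gchoose m) * ((-1)^(j + m) * (s gchoose (n - (j + m))) * x^(n - (j + m))) * y^m)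
         - (\<Sum>m=0..n-j. ((r - of_nat j) gchoose m) * ((-1)^n * (t gchoose (n - (j + m))) * x^(n - (j + m))) * (x + y)^m)))"
    unfolding A_poly_eq
      sum_gchoose_binomial_convolution[of r "\<lambda>k. (-1)^k * (s gchoose (n - k)) * x^(n - k)" b "power y"]
      sum_gchoose_binomial_convolution[of r "\<lambda>k. (-1)^n * (t gchoose (n - k)) * x^(n - k)" b "power (x + y)"]
    by (simp add: right_diff_distrib sum_subtractf)
  also have "\<dots> = 0"
    using assms(2) by (intro sum.neutral ballI) (simp add: sum_gchoose_power_reflect_shift)
  finally show ?thesis .
qed

end
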